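(* Consider a POMDP with finite state, action and observation sets $\mathcal{S},\mathcal{A},O$, known cost $C:\mathcal{S}\times\mathcal{A}\to[0,1]$, known observation kernel $\eta$, and unknown transition kernel $\theta_*\in\Theta\subseteq\Theta_H$ drawn from a prior $f$, and let $(\theta_k,t_k,T_k,K_T)$ be generated by the PSRL-POMDP algorithm run for $T$ steps. Then $$R_T\le H\,\mathbb{E}_{\theta_*}[K_T]+R_1+R_2+R_3,$$ where $$R_1:=\mathbb{E}_{\theta_*}\Big[\sum_{k=1}^{K_T}T_k\big(J(\theta_k)-J(\theta_* )\big)\Big],$$ $$R_2:=H\,\mathbb{E}_{\theta_*}\Big[\sum_{k=1}^{K_T}\sum_{t=t_k}^{t_{k+1}-1}\Big(\sum_{s'}\big|\theta_*(s'\mid s_t,a_t)-\theta_k(s'\mid s_t,a_t)\big|+\sum_s\big|h_t(s;\theta_* )-h_t(s;\theta_k)\big|\Big)\Big],$$ $$R_3:=\mathbb{E}_{\theta_*}\Big[\sum_{k=1}^{K_T}\sum_{t=t_k}^{t_{k+1}-1}\big(c(h_t(\cdot;\theta_* ),a_t)-c(h_t(\cdot;\theta_k),a_t)\big)\Big].$$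
   Context: Notation: $\Delta_{\mathcal{X}}$ is the set of distributions on $\mathcal{X}$; $c(b,a):=\sum_sC(s,a)b(s)$; $P(o\mid b,a;\theta):=\sum_{s',s}\eta(o\mid s')\theta(s'\mid s,a)b(s)$; $\tau(b,a,o;\theta)(s'):=\frac{\sum_s\eta(o\mid s')\theta(s'\mid s,a)b(s)}{\sum_{s'',s}\eta(o\mid s'')\theta(s''\mid s,a)b(s)}$. $\Theta_H$ is the set of transition kernels $\theta$ for which there exist $J(\theta)\in\mathbb{R}$ and a bounded $v(\cdot;\theta):\Delta_{\mathcal{S}}\to\mathbb{R}$ with $\inf_b v(b;\theta)=0$, $\sup_b v(b;\theta)\le H$, satisfying for all $b$: $J(\theta)+v(b;\theta)=\min_a\{c(b,a)+\sum_oP(o\mid b,a;\theta)v(\tau(b,a,o;\theta);\theta)\}$; $\pi^*(b;\theta)$ denotes a minimizer of the right-hand side. Dynamics: $s_1\sim h(\cdot;\theta_* )$, $o_t\sim\eta(\cdot\mid s_t)$, $s_{t+1}\sim\theta_*(\cdot\mid s_t,a_t)$, cost $C(s_t,a_t)$ (unobserved). $\mathcal{F}_t$ is the sigma-algebra generated by $a_1,o_1,\dots,a_{t-1},o_t$. For each $\theta\in\Theta$, $h_t(s;\theta)=\Pr(s_t=s\mid\mathcal{F}_t;\theta)$, computed by $h_1(s;\theta)\propto\eta(o_1\mid s)h(s;\theta)$ and $h_{t+1}(\cdot;\theta)=\tau(h_t(\cdot;\theta),a_t,o_{t+1};\theta)$; $f_t$ is the posterior of $\theta_*$ given $\mathcal{F}_t$.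 PSRL-POMDP proceeds in episodes $k=1,2,\dots$ starting at times $t_1=1<t_2<\cdots$ (stopping times determined by the observed history); at $t_k$ it samples $\theta_k\sim f_{t_k}$ and for $t_k\le t<t_{k+1}$ plays $a_t=\pi^*(h_t(\cdot;\theta_k);\theta_k)$. $K_T$ is the number of episodes started by time $T$, $t_k:=T+1$ for $k>K_T$, and $T_k:=t_{k+1}-t_k$. $\mathbb{E}_{\theta_*}[\cdot]:=\mathbb{E}[\cdot\mid\theta_*]$, and the regret is $R_T:=\mathbb{E}_{\theta_*}\big[\sum_{t=1}^T(C(s_t,a_t)-J(\theta_* ))\big]$. *)

theory Defs
  imports "HOL-Probability.Probability"
begin

text \<open>A transition kernel theta is encoded as theta s a s' = theta(s' | s, a);
  an observation kernel eta as eta s ob = eta(ob | s); a cost as C s a.\<close>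

type_synonym ('s, 'a) kern = "'s \<Rightarrow> 'a \<Rightarrow> 's \<Rightarrow> real"

text \<open>Histories F_t: first observation o_1 and the list of pairs (a_1,o_2),...,(a_(t-1),o_t).\<close>
type_synonym ('a, 'o) hist = "'o \<times> ('a \<times> 'o) list"

definition Dist :: "('s::finite \<Rightarrow> real) set" where
  "Dist = {b. (\<forall>s. 0 \<le> b s) \<and> sum b UNIV = 1}"

definition is_kernel :: "('s::finite, 'a) kern \<Rightarrow> bool" where
  "is_kernel \<theta> \<longleftrightarrow> (\<forall>s a. \<theta> s a \<in> Dist)"

definition cbar :: "('s::finite \<Rightarrow> 'a \<Rightarrow> real) \<Rightarrow> ('s \<Rightarrow> real) \<Rightarrow> 'a \<Rightarrow> real" where
  "cbar C b a = (\<Sum>s\<in>UNIV. C s a * b s)"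

definition Pobs :: "('s::finite \<Rightarrow> 'o \<Rightarrow> real) \<Rightarrow> ('s, 'a) kern \<Rightarrow> ('s \<Rightarrow> real) \<Rightarrow> 'a \<Rightarrow> 'o \<Rightarrow> real" where
  "Pobs \<eta> \<theta> b a ob = (\<Sum>s'\<in>UNIV. \<Sum>s\<in>UNIV. \<eta> s' ob * \<theta> s a s' * b s)"

text \<open>Belief update tau. When the normalising constant P(o|b,a;theta) is zero the
  paper's formula is undefined; we then keep the belief b (convention).\<close>
definition tau :: "('s::finite \<Rightarrow> 'o \<Rightarrow> real) \<Rightarrow> ('s, 'a) kern \<Rightarrow> ('s \<Rightarrow> real) \<Rightarrow> 'a \<Rightarrow> 'o \<Rightarrow> ('s \<Rightarrow> real)" where
  "tau \<eta> \<theta> b a ob =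
     (if Pobs \<eta> \<theta> b a ob = 0 then b
      else (\<lambda>s'. (\<Sum>s\<in>UNIV. \<eta> s' ob * \<theta> s a s' * b s) / Pobs \<eta> \<theta> b a ob))"

definition bellman_rhs ::
  "('s::finite \<Rightarrow> 'o::finite \<Rightarrow> real) \<Rightarrow> ('s \<Rightarrow> 'a \<Rightarrow> real) \<Rightarrow> ('s, 'a) kern
   \<Rightarrow> (('s \<Rightarrow> real) \<Rightarrow> real) \<Rightarrow> ('s \<Rightarrow> real) \<Rightarrow> 'a \<Rightarrow> real" where
  "bellman_rhs \<eta> C \<theta> v b a =
     cbar C b a + (\<Sum>ob\<in>UNIV. Pobs \<eta> \<theta> b a ob * v (tau \<eta> \<theta> b a ob))"

definition acoe_sol ::
  "('s::finite \<Rightarrow> 'o::finite \<Rightarrow> real) \<Rightarrow> ('s \<Rightarrow> 'a::finite \<Rightarrow> real) \<Rightarrow> real \<Rightarrow> ('s, 'a) kern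
   \<Rightarrow> real \<Rightarrow> (('s \<Rightarrow> real) \<Rightarrow> real) \<Rightarrow> bool" where
  "acoe_sol \<eta> C H \<theta> J v \<longleftrightarrow>
     bdd_above (v ` Dist) \<and> bdd_below (v ` Dist) \<and>
     (INF b\<in>Dist. v b) = 0 \<and> (\<forall>b\<in>Dist. v b \<le> H) \<and>
     (\<forall>b\<in>Dist. J + v b = Min (range (bellman_rhs \<eta> C \<theta> v b)))"

definition Theta_H ::
  "('s::finite \<Rightarrow> 'o::finite \<Rightarrow> real) \<Rightarrow> ('s \<Rightarrow> 'a::finite \<Rightarrow> real) \<Rightarrow> real \<Rightarrow> ('s, 'a) kern set" where
  "Theta_H \<eta> C H = {\<theta>. is_kernel \<theta> \<and> (\<exists>J v. acoe_sol \<eta> C H \<theta> J v)}"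

text \<open>h_1(s;theta) proportional to eta(o_1|s) h(s;theta) (if the constant is zero we keep h(.;theta)).\<close>
definition init_belief :: "('s::finite \<Rightarrow> 'o \<Rightarrow> real) \<Rightarrow> (('s, 'a) kern \<Rightarrow> 's \<Rightarrow> real)
   \<Rightarrow> ('s, 'a) kern \<Rightarrow> 'o \<Rightarrow> ('s \<Rightarrow> real)" where
  "init_belief \<eta> h \<theta> o1 =
     (let Z = (\<Sum>s\<in>UNIV. \<eta> s o1 * h \<theta> s) in
      if Z = 0 then h \<theta> else (\<lambda>s. \<eta> s o1 * h \<theta> s / Z))"

definition belief :: "('s::finite \<Rightarrow> 'o \<Rightarrow> real) \<Rightarrow> (('s, 'a) kern \<Rightarrow> 's \<Rightarrow> real)
   \<Rightarrow> ('s, 'a) kern \<Rightarrow> ('a, 'o) hist \<Rightarrow> ('s \<Rightarrow> real)" where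
  "belief \<eta> h \<theta> hs =
     foldl (\<lambda>b (a, ob). tau \<eta> \<theta> b a ob) (init_belief \<eta> h \<theta> (fst hs)) (snd hs)"

text \<open>Likelihood of the observations in the history under theta (action choices
  do not depend on theta and cancel in Bayes' rule).\<close>
definition lik :: "('s::finite \<Rightarrow> 'o \<Rightarrow> real) \<Rightarrow> (('s, 'a) kern \<Rightarrow> 's \<Rightarrow> real)
   \<Rightarrow> ('s, 'a) kern \<Rightarrow> ('a, 'o) hist \<Rightarrow> real" where
  "lik \<eta> h \<theta> hs =
     snd (foldl (\<lambda>(b, p) (a, ob). (tau \<eta> \<theta> b a ob, p * Pobs \<eta> \<theta> b a ob))
                (init_belief \<eta> h \<theta> (fst hs), \<Sum>s\<in>UNIV. \<eta> s (fst hs) * h \<theta> s) (snd hs))"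

text \<open>Posterior f_t of theta_* given F_t, for the prior F (a probability measure on Theta).
  On histories of zero marginal likelihood we use the prior (convention).\<close>
definition posterior :: "('s::finite, 'a) kern measure \<Rightarrow> ('s \<Rightarrow> 'o \<Rightarrow> real)
   \<Rightarrow> (('s, 'a) kern \<Rightarrow> 's \<Rightarrow> real) \<Rightarrow> ('a, 'o) hist \<Rightarrow> ('s, 'a) kern measure" where
  "posterior F \<eta> h hs =
     (let Z = (\<integral>\<theta>. lik \<eta> h \<theta> hs \<partial>F) in
      if 0 < Z then density F (\<lambda>\<theta>. ennreal (lik \<eta> h \<theta> hs / Z)) else F)"

text \<open>ep_expect ... g n s hs th: expected value of the sum of the per-step quantity
  g over the next n steps, when the current hidden state is s, the observed history
  is hs (= F_t) and the sample of the current episode is th.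
  At time t a new episode starts iff t = 1 or newep hs (stopping rule determined by
  the observed history); then theta_k is drawn from the posterior f_t.
  The action is a_t = pol theta_k (h_t(.;theta_k)); the per-step quantity
  g s_t a_t theta_k F_t (new episode flag) is collected; then
  s_(t+1) ~ theta_*(.|s_t,a_t) and o_(t+1) ~ eta(.|s_(t+1)).\<close>
primrec ep_expect ::
  "('s::finite \<Rightarrow> 'o::finite \<Rightarrow> real) \<Rightarrow> (('s, 'a::finite) kern \<Rightarrow> 's \<Rightarrow> real) \<Rightarrow> ('s, 'a) kern
   \<Rightarrow> ('s, 'a) kern measure \<Rightarrow> (('a, 'o) hist \<Rightarrow> bool)
   \<Rightarrow> (('s, 'a) kern \<Rightarrow> ('s \<Rightarrow> real) \<Rightarrow> 'a)
   \<Rightarrow> ('s \<Rightarrow> 'a \<Rightarrow> ('s, 'a) kern \<Rightarrow> ('a, 'o) hist \<Rightarrow> bool \<Rightarrow> real)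
   \<Rightarrow> nat \<Rightarrow> 's \<Rightarrow> ('a, 'o) hist \<Rightarrow> ('s, 'a) kern \<Rightarrow> real" where
  "ep_expect \<eta> h \<theta>s F newep pol g 0 s hs th = 0"
| "ep_expect \<eta> h \<theta>s F newep pol g (Suc n) s hs th =
     (let step = (\<lambda>\<theta>' fl.
          let a = pol \<theta>' (belief \<eta> h \<theta>' hs) in
          g s a \<theta>' hs fl +
          (\<Sum>s'\<in>UNIV. \<theta>s s a s' *
             (\<Sum>ob\<in>UNIV. \<eta> s' ob * ep_expect \<eta> h \<theta>s F newep pol g n s' (fst hs, snd hs @ [(a, ob)]) \<theta>')))
      in if snd hs = [] \<or> newep hs
         then (\<integral>\<theta>'. step \<theta>' True \<partial>(posterior F \<eta> h hs))
         else step th False)"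

text \<open>E_{theta_*}[ sum_{t=1}^T g(...) ] with s_1 ~ h(.;theta_*), o_1 ~ eta(.|s_1).\<close>
definition expect_sum ::
  "('s::finite \<Rightarrow> 'o::finite \<Rightarrow> real) \<Rightarrow> (('s, 'a::finite) kern \<Rightarrow> 's \<Rightarrow> real) \<Rightarrow> ('s, 'a) kern
   \<Rightarrow> ('s, 'a) kern measure \<Rightarrow> (('a, 'o) hist \<Rightarrow> bool)
   \<Rightarrow> (('s, 'a) kern \<Rightarrow> ('s \<Rightarrow> real) \<Rightarrow> 'a)
   \<Rightarrow> ('s \<Rightarrow> 'a \<Rightarrow> ('s, 'a) kern \<Rightarrow> ('a, 'o) hist \<Rightarrow> bool \<Rightarrow> real) \<Rightarrow> nat \<Rightarrow> real" where
  "expect_sum \<eta> h \<theta>s F newep pol g T =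
     (\<Sum>s\<in>UNIV. h \<theta>s s * (\<Sum>ob\<in>UNIV. \<eta> s ob *
        ep_expect \<eta> h \<theta>s F newep pol g T s (ob, []) undefined))"

end

theory Submission
  imports Defs
begin

text \<open>
  Charge step t of episode k with the regret integrand C(s_t,a_t) - J(\<theta>_*) minus the
  integrands of the four terms on the right-hand side; it suffices to show that the expected
  total charge is nonpositive. Averaged over the true belief h_t(.;\<theta>_*), the charge equals
  c(h_t(.;\<theta>_k),a_t) - J(\<theta>_k) minus H times the episode-start indicator and the two
  distances. By the Bellman equation for \<theta>_k, and because weighting the observations by
  their law under \<theta>_* instead of \<theta>_k changes the expectation of v(.;\<theta>_k) by at most
  H times the two distances, the bias v(h_t(.;\<theta>_k);\<theta>_k) \<in> [0,H] bounds the expected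
  remaining charge within an episode, and the charge H of an episode start pays for the
  potential of the new episode. Backward induction over the horizon gives the claim.
\<close>

section \<open>Beliefs and observation probabilities\<close>

lemma Dist_nonneg: "b \<in> Dist \<Longrightarrow> 0 \<le> b s"
  by (simp add: Dist_def)

lemma sum_Dist: "b \<in> Dist \<Longrightarrow> (\<Sum>s\<in>UNIV. b s) = 1"
  by (simp add: Dist_def)

lemma point_mass_in_Dist: "(\<lambda>s. if s = s0 then 1 else 0) \<in> Dist"
  by (simp add: Dist_def)

lemma sum_abs_diff_Dist_le:
  assumes "p \<in> Dist" "q \<in> Dist"
  shows "(\<Sum>s\<in>UNIV. \<bar>p s - q s\<bar>) \<le> 2"
proof -
  have "(\<Sum>s\<in>UNIV. \<bar>p s - q s\<bar>) \<le> (\<Sum>s\<in>UNIV. p s + q s)"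
    using assms by (intro sum_mono) (auto simp: Dist_nonneg abs_le_iff)
  also have "\<dots> = 2"
    using assms by (simp add: sum.distrib sum_Dist)
  finally show ?thesis .
qed

lemma tau_numerator_nonneg:
  assumes "\<forall>s. \<eta> s \<in> Dist" "is_kernel \<theta>" "b \<in> Dist"
  shows "0 \<le> (\<Sum>s\<in>UNIV. \<eta> s' ob * \<theta> s a s' * b s)"
  using assms unfolding is_kernel_def
  by (intro sum_nonneg mult_nonneg_nonneg) (auto simp: Dist_nonneg)

lemma Pobs_nonneg:
  assumes "\<forall>s. \<eta> s \<in> Dist" "is_kernel \<theta>" "b \<in> Dist"
  shows "0 \<le> Pobs \<eta> \<theta> b a ob"
  unfolding Pobs_def using tau_numerator_nonneg[OF assms] by (rule sum_nonneg)

lemma sum_Pobs: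
  fixes \<eta> :: "'s::finite \<Rightarrow> 'o::finite \<Rightarrow> real"
  assumes eta: "\<forall>s. \<eta> s \<in> Dist" and \<theta>: "is_kernel \<theta>" and b: "b \<in> Dist"
  shows "(\<Sum>ob\<in>UNIV. Pobs \<eta> \<theta> b a ob) = 1"
proof -
  have "(\<Sum>ob\<in>UNIV. Pobs \<eta> \<theta> b a ob)
      = (\<Sum>s\<in>UNIV. b s * (\<Sum>s'\<in>UNIV. \<theta> s a s' * (\<Sum>ob\<in>UNIV. \<eta> s' ob)))"
    unfolding Pobs_def sum_distrib_left sum_distrib_right
    by (subst sum.swap, subst (2) sum.swap, subst (3) sum.swap) (simp add: mult_ac)
  also have "\<dots> = 1"
    using eta \<theta> b by (simp add: is_kernel_def sum_Dist)
  finally show ?thesis .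
qed

lemma tau_in_Dist:
  fixes \<eta> :: "'s::finite \<Rightarrow> 'o::finite \<Rightarrow> real"
  assumes eta: "\<forall>s. \<eta> s \<in> Dist" and \<theta>: "is_kernel \<theta>" and b: "b \<in> Dist"
  shows "tau \<eta> \<theta> b a ob \<in> Dist"
proof (cases "Pobs \<eta> \<theta> b a ob = 0")
  case True
  then show ?thesis
    using b by (simp add: tau_def)
next
  case False
  have "(\<Sum>s'\<in>UNIV. (\<Sum>s\<in>UNIV. \<eta> s' ob * \<theta> s a s' * b s) / Pobs \<eta> \<theta> b a ob) = 1"
    using False by (simp add: sum_divide_distrib[symmetric] Pobs_def)
  with False tau_numerator_nonneg[OF eta \<theta> b] Pobs_nonneg[OF eta \<theta> b] show ?thesis
    by (simp add: tau_def Dist_def)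
qed

lemma init_belief_in_Dist:
  assumes eta: "\<forall>s. 0 \<le> \<eta> s o1" and h: "h \<theta> \<in> Dist"
  shows "init_belief \<eta> h \<theta> o1 \<in> Dist"
proof (cases "(\<Sum>s\<in>UNIV. \<eta> s o1 * h \<theta> s) = 0")
  case True
  then show ?thesis
    using h by (simp add: init_belief_def)
next
  case False
  have "0 \<le> \<eta> s o1 * h \<theta> s" for s
    using eta h by (simp add: Dist_nonneg)
  with False show ?thesis
    by (simp add: init_belief_def Dist_def Let_def sum_divide_distrib[symmetric] sum_nonneg)
qed

lemma belief_Nil: "belief \<eta> h \<theta> (o1, []) = init_belief \<eta> h \<theta> o1"
  by (simp add: belief_def)

lemma belief_snoc: "belief \<eta> h \<theta> (o1, xs @ [(a, ob)]) = tau \<eta> \<theta> (belief \<eta> h \<theta> (o1, xs)) a ob"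
  by (simp add: belief_def)

lemma belief_in_Dist:
  fixes \<eta> :: "'s::finite \<Rightarrow> 'o::finite \<Rightarrow> real"
  assumes eta: "\<forall>s. \<eta> s \<in> Dist" and \<theta>: "is_kernel \<theta>" and h: "h \<theta> \<in> Dist"
  shows "belief \<eta> h \<theta> hs \<in> Dist"
proof (cases hs)
  case (Pair o1 xs)
  have "belief \<eta> h \<theta> (o1, xs) \<in> Dist"
  proof (induction xs rule: rev_induct)
    case Nil
    show ?case
      using init_belief_in_Dist[of \<eta> o1 h \<theta>] eta h by (simp add: belief_Nil Dist_nonneg)
  next
    case (snoc x xs)
    then show ?case
      using tau_in_Dist[OF eta \<theta>] by (cases x) (simp add: belief_snoc)
  qed
  with Pair show ?thesis
    by simp
qed

lemma Pobs_mult_tau: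
  fixes \<eta> :: "'s::finite \<Rightarrow> 'o::finite \<Rightarrow> real"
  assumes eta: "\<forall>s. \<eta> s \<in> Dist" and \<theta>: "is_kernel \<theta>" and b: "b \<in> Dist"
  shows "(\<Sum>s\<in>UNIV. b s * \<theta> s a s' * \<eta> s' ob) = Pobs \<eta> \<theta> b a ob * tau \<eta> \<theta> b a ob s'"
proof (cases "Pobs \<eta> \<theta> b a ob = 0")
  case True
  with tau_numerator_nonneg[OF eta \<theta> b] have "(\<Sum>s\<in>UNIV. \<eta> s' ob * \<theta> s a s' * b s) = 0"
    unfolding Pobs_def by (simp add: sum_nonneg_eq_0_iff)
  with True show ?thesis
    by (simp add: mult_ac)
next
  case False
  then show ?thesis
    by (simp add: tau_def mult_ac)
qed

lemma sum_one_step_eq_sum_Pobs_tau: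
  fixes \<eta> :: "'s::finite \<Rightarrow> 'o::finite \<Rightarrow> real"
  assumes eta: "\<forall>s. \<eta> s \<in> Dist" and \<theta>: "is_kernel \<theta>" and b: "b \<in> Dist"
  shows "(\<Sum>s\<in>UNIV. b s * (\<Sum>s'\<in>UNIV. \<theta> s a s' * (\<Sum>ob\<in>UNIV. \<eta> s' ob * f s' ob)))
       = (\<Sum>ob\<in>UNIV. Pobs \<eta> \<theta> b a ob * (\<Sum>s'\<in>UNIV. tau \<eta> \<theta> b a ob s' * f s' ob))"
proof -
  have "(\<Sum>s\<in>UNIV. b s * (\<Sum>s'\<in>UNIV. \<theta> s a s' * (\<Sum>ob\<in>UNIV. \<eta> s' ob * f s' ob)))
      = (\<Sum>ob\<in>UNIV. \<Sum>s'\<in>UNIV. (\<Sum>s\<in>UNIV. b s * \<theta> s a s' * \<eta> s' ob) * f s' ob)"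
    unfolding sum_distrib_left sum_distrib_right
    by (subst sum.swap, subst (2) sum.swap, subst sum.swap) (simp add: mult_ac)
  also have "\<dots> = (\<Sum>ob\<in>UNIV. Pobs \<eta> \<theta> b a ob * (\<Sum>s'\<in>UNIV. tau \<eta> \<theta> b a ob s' * f s' ob))"
    by (simp only: Pobs_mult_tau[OF eta \<theta> b]) (simp only: sum_distrib_left mult.assoc)
  finally show ?thesis .
qed

lemma init_belief_weight:
  assumes "\<forall>s. 0 \<le> \<eta> s o1 * h \<theta> s"
  shows "\<eta> s o1 * h \<theta> s = (\<Sum>s'\<in>UNIV. \<eta> s' o1 * h \<theta> s') * init_belief \<eta> h \<theta> o1 s"
proof (cases "(\<Sum>s'\<in>UNIV. \<eta> s' o1 * h \<theta> s') = 0")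
  case True
  with assms have "\<eta> s o1 * h \<theta> s = 0"
    by (simp add: sum_nonneg_eq_0_iff)
  with True show ?thesis
    by simp
next
  case False
  then show ?thesis
    by (simp add: init_belief_def Let_def)
qed

lemma expect_sum_eq_sum_init_belief:
  assumes "\<forall>s ob. 0 \<le> \<eta> s ob * h \<theta>s s"
  shows "expect_sum \<eta> h \<theta>s F newep pol g T
       = (\<Sum>ob\<in>UNIV. (\<Sum>s\<in>UNIV. \<eta> s ob * h \<theta>s s) *
            (\<Sum>s\<in>UNIV. belief \<eta> h \<theta>s (ob, []) s * ep_expect \<eta> h \<theta>s F newep pol g T s (ob, []) undefined))"
proof -
  define W where "W s ob = ep_expect \<eta> h \<theta>s F newep pol g T s (ob, []) undefined" for s ob
  define Z where "Z ob = (\<Sum>s\<in>UNIV. \<eta> s ob * h \<theta>s s)" for ob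
  have "\<eta> s ob * h \<theta>s s = Z ob * belief \<eta> h \<theta>s (ob, []) s" for s ob
    unfolding belief_Nil Z_def by (rule init_belief_weight) (use assms in simp)
  then have weight: "h \<theta>s s * (\<eta> s ob * W s ob) = Z ob * (belief \<eta> h \<theta>s (ob, []) s * W s ob)" for s ob
    by (metis mult.assoc mult.commute)
  have "expect_sum \<eta> h \<theta>s F newep pol g T
      = (\<Sum>ob\<in>UNIV. Z ob * (\<Sum>s\<in>UNIV. belief \<eta> h \<theta>s (ob, []) s * W s ob))"
    unfolding expect_sum_def W_def[symmetric] sum_distrib_left by (subst sum.swap) (simp only: weight)
  then show ?thesis
    unfolding W_def Z_def .
qed

lemma abs_mult_diff_le:
  fixes x1 x2 y1 y2 :: real
  assumes "0 \<le> y1" "0 \<le> x2"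
  shows "\<bar>x1 * y1 - x2 * y2\<bar> \<le> y1 * \<bar>x1 - x2\<bar> + x2 * \<bar>y1 - y2\<bar>"
proof -
  have "x1 * y1 - x2 * y2 = y1 * (x1 - x2) + x2 * (y1 - y2)"
    by (simp add: algebra_simps)
  then show ?thesis
    using assms abs_triangle_ineq[of "y1 * (x1 - x2)" "x2 * (y1 - y2)"] by (simp add: abs_mult)
qed

lemma sum_abs_Pobs_diff_le:
  fixes \<eta> :: "'s::finite \<Rightarrow> 'o::finite \<Rightarrow> real"
  assumes eta: "\<forall>s. \<eta> s \<in> Dist" and \<theta>2: "is_kernel \<theta>2" and b1: "b1 \<in> Dist"
  shows "(\<Sum>ob\<in>UNIV. \<bar>Pobs \<eta> \<theta>1 b1 a ob - Pobs \<eta> \<theta>2 b2 a ob\<bar>)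
         \<le> (\<Sum>s\<in>UNIV. b1 s * (\<Sum>s'\<in>UNIV. \<bar>\<theta>1 s a s' - \<theta>2 s a s'\<bar>)) + (\<Sum>s\<in>UNIV. \<bar>b1 s - b2 s\<bar>)"
proof -
  define D where "D s s' = \<theta>1 s a s' * b1 s - \<theta>2 s a s' * b2 s" for s s'
  have "\<bar>Pobs \<eta> \<theta>1 b1 a ob - Pobs \<eta> \<theta>2 b2 a ob\<bar> \<le> (\<Sum>s'\<in>UNIV. \<Sum>s\<in>UNIV. \<eta> s' ob * \<bar>D s s'\<bar>)" for ob
  proof -
    have "Pobs \<eta> \<theta>1 b1 a ob - Pobs \<eta> \<theta>2 b2 a ob = (\<Sum>s'\<in>UNIV. \<Sum>s\<in>UNIV. \<eta> s' ob * D s s')"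
      unfolding Pobs_def D_def by (simp add: sum_subtractf[symmetric] algebra_simps)
    also have "\<bar>\<dots>\<bar> \<le> (\<Sum>s'\<in>UNIV. \<Sum>s\<in>UNIV. \<bar>\<eta> s' ob * D s s'\<bar>)"
      by (rule order_trans[OF sum_abs sum_mono[OF sum_abs]])
    finally show ?thesis
      using eta by (simp add: abs_mult Dist_nonneg)
  qed
  then have "(\<Sum>ob\<in>UNIV. \<bar>Pobs \<eta> \<theta>1 b1 a ob - Pobs \<eta> \<theta>2 b2 a ob\<bar>)
      \<le> (\<Sum>ob\<in>UNIV. \<Sum>s'\<in>UNIV. \<Sum>s\<in>UNIV. \<eta> s' ob * \<bar>D s s'\<bar>)"
    by (rule sum_mono)
  also have "\<dots> = (\<Sum>s'\<in>UNIV. \<Sum>s\<in>UNIV. \<Sum>ob\<in>UNIV. \<eta> s' ob * \<bar>D s s'\<bar>)"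
    by (subst sum.swap, rule sum.cong[OF refl], rule sum.swap)
  also have "\<dots> = (\<Sum>s'\<in>UNIV. \<Sum>s\<in>UNIV. \<bar>D s s'\<bar>)"
    using eta by (simp add: sum_distrib_right[symmetric] sum_Dist)
  also have "\<dots> \<le> (\<Sum>s'\<in>UNIV. \<Sum>s\<in>UNIV. b1 s * \<bar>\<theta>1 s a s' - \<theta>2 s a s'\<bar> + \<theta>2 s a s' * \<bar>b1 s - b2 s\<bar>)"
    unfolding D_def using \<theta>2 b1
    by (intro sum_mono abs_mult_diff_le) (simp_all add: is_kernel_def Dist_nonneg)
  also have "\<dots> = (\<Sum>s\<in>UNIV. b1 s * (\<Sum>s'\<in>UNIV. \<bar>\<theta>1 s a s' - \<theta>2 s a s'\<bar>))
      + (\<Sum>s\<in>UNIV. \<bar>b1 s - b2 s\<bar> * (\<Sum>s'\<in>UNIV. \<theta>2 s a s'))"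
    by (subst sum.swap) (simp add: sum.distrib sum_distrib_left sum_distrib_right mult.commute)
  also have "\<dots> = (\<Sum>s\<in>UNIV. b1 s * (\<Sum>s'\<in>UNIV. \<bar>\<theta>1 s a s' - \<theta>2 s a s'\<bar>)) + (\<Sum>s\<in>UNIV. \<bar>b1 s - b2 s\<bar>)"
    using \<theta>2 by (simp add: is_kernel_def sum_Dist)
  finally show ?thesis .
qed

lemma sum_Pobs_diff_mult_le:
  fixes \<eta> :: "'s::finite \<Rightarrow> 'o::finite \<Rightarrow> real"
  assumes eta: "\<forall>s. \<eta> s \<in> Dist" and \<theta>2: "is_kernel \<theta>2" and b1: "b1 \<in> Dist"
    and V: "\<And>ob. 0 \<le> V ob" "\<And>ob. V ob \<le> H"
  shows "(\<Sum>ob\<in>UNIV. (Pobs \<eta> \<theta>1 b1 a ob - Pobs \<eta> \<theta>2 b2 a ob) * V ob)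
         \<le> H * ((\<Sum>s\<in>UNIV. b1 s * (\<Sum>s'\<in>UNIV. \<bar>\<theta>1 s a s' - \<theta>2 s a s'\<bar>)) + (\<Sum>s\<in>UNIV. \<bar>b1 s - b2 s\<bar>))"
proof -
  have "(\<Sum>ob\<in>UNIV. (Pobs \<eta> \<theta>1 b1 a ob - Pobs \<eta> \<theta>2 b2 a ob) * V ob)
      \<le> (\<Sum>ob\<in>UNIV. H * \<bar>Pobs \<eta> \<theta>1 b1 a ob - Pobs \<eta> \<theta>2 b2 a ob\<bar>)"
  proof (rule sum_mono)
    fix ob
    have "(Pobs \<eta> \<theta>1 b1 a ob - Pobs \<eta> \<theta>2 b2 a ob) * V ob \<le> \<bar>Pobs \<eta> \<theta>1 b1 a ob - Pobs \<eta> \<theta>2 b2 a ob\<bar> * V ob"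
      using V(1) by (intro mult_right_mono) auto
    also have "\<dots> \<le> H * \<bar>Pobs \<eta> \<theta>1 b1 a ob - Pobs \<eta> \<theta>2 b2 a ob\<bar>"
      by (metis V(2) abs_ge_zero mult.commute mult_left_mono)
    finally show "(Pobs \<eta> \<theta>1 b1 a ob - Pobs \<eta> \<theta>2 b2 a ob) * V ob \<le> H * \<bar>Pobs \<eta> \<theta>1 b1 a ob - Pobs \<eta> \<theta>2 b2 a ob\<bar>" .
  qed
  also have "\<dots> \<le> H * ((\<Sum>s\<in>UNIV. b1 s * (\<Sum>s'\<in>UNIV. \<bar>\<theta>1 s a s' - \<theta>2 s a s'\<bar>)) + (\<Sum>s\<in>UNIV. \<bar>b1 s - b2 s\<bar>))"
    unfolding sum_distrib_left[symmetric]
    using V order_trans[OF V] by (intro mult_left_mono sum_abs_Pobs_diff_le[OF eta \<theta>2 b1]) auto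
  finally show ?thesis .
qed

section \<open>Solutions of the average-cost optimality equation\<close>

lemma cbar_bounds:
  assumes "\<forall>s a. 0 \<le> C s a \<and> C s a \<le> 1" and "b \<in> Dist"
  shows "0 \<le> cbar C b a" "cbar C b a \<le> 1"
proof -
  show "0 \<le> cbar C b a"
    unfolding cbar_def using assms by (intro sum_nonneg mult_nonneg_nonneg) (auto simp: Dist_nonneg)
  have "cbar C b a \<le> (\<Sum>s\<in>UNIV. 1 * b s)"
    unfolding cbar_def using assms by (intro sum_mono mult_right_mono) (auto simp: Dist_nonneg)
  then show "cbar C b a \<le> 1"
    using assms by (simp add: sum_Dist)
qed

lemma acoe_sol_bias_bounds:
  assumes "acoe_sol \<eta> C H \<theta> J v" and "b \<in> Dist"
  shows "0 \<le> v b" "v b \<le> H"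
proof -
  have "(INF b\<in>Dist. v b) \<le> v b"
    using assms unfolding acoe_sol_def by (intro cINF_lower) auto
  then show "0 \<le> v b"
    using assms(1) by (simp add: acoe_sol_def)
  show "v b \<le> H"
    using assms by (simp add: acoe_sol_def)
qed

lemma acoe_sol_bellman:
  assumes "acoe_sol \<eta> C H \<theta> J v" and "b \<in> Dist"
    and "bellman_rhs \<eta> C \<theta> v b a = Min (range (bellman_rhs \<eta> C \<theta> v b))"
  shows "J + v b = cbar C b a + (\<Sum>ob\<in>UNIV. Pobs \<eta> \<theta> b a ob * v (tau \<eta> \<theta> b a ob))"
  using assms by (simp add: acoe_sol_def bellman_rhs_def)

lemma sum_Pobs_mult_bias_bounds:
  fixes \<eta> :: "'s::finite \<Rightarrow> 'o::finite \<Rightarrow> real"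
  assumes eta: "\<forall>s. \<eta> s \<in> Dist" and \<theta>: "is_kernel \<theta>" and sol: "acoe_sol \<eta> C H \<theta> J v"
    and b: "b \<in> Dist"
  shows "0 \<le> (\<Sum>ob\<in>UNIV. Pobs \<eta> \<theta> b a ob * v (tau \<eta> \<theta> b a ob))"
    "(\<Sum>ob\<in>UNIV. Pobs \<eta> \<theta> b a ob * v (tau \<eta> \<theta> b a ob)) \<le> H"
proof -
  note P = Pobs_nonneg[OF eta \<theta> b] and V = acoe_sol_bias_bounds[OF sol tau_in_Dist[OF eta \<theta> b]]
  show "0 \<le> (\<Sum>ob\<in>UNIV. Pobs \<eta> \<theta> b a ob * v (tau \<eta> \<theta> b a ob))"
    using P V by (intro sum_nonneg mult_nonneg_nonneg)
  have "(\<Sum>ob\<in>UNIV. Pobs \<eta> \<theta> b a ob * v (tau \<eta> \<theta> b a ob)) \<le> (\<Sum>ob\<in>UNIV. Pobs \<eta> \<theta> b a ob * H)"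
    using P V by (intro sum_mono mult_left_mono)
  also have "\<dots> = H"
    using sum_Pobs[OF eta \<theta> b] by (simp add: sum_distrib_right[symmetric])
  finally show "(\<Sum>ob\<in>UNIV. Pobs \<eta> \<theta> b a ob * v (tau \<eta> \<theta> b a ob)) \<le> H" .
qed

lemma acoe_sol_gain_bound:
  fixes \<eta> :: "'s::finite \<Rightarrow> 'o::finite \<Rightarrow> real" and C :: "'s \<Rightarrow> 'a::finite \<Rightarrow> real"
  assumes eta: "\<forall>s. \<eta> s \<in> Dist" and cost: "\<forall>s a. 0 \<le> C s a \<and> C s a \<le> 1"
    and \<theta>: "is_kernel \<theta>" and sol: "acoe_sol \<eta> C H \<theta> J v"
  shows "\<bar>J\<bar> \<le> 1 + H"
proof -
  define b :: "'s \<Rightarrow> real" where "b = (\<lambda>s. if s = undefined then 1 else 0)"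
  have b: "b \<in> Dist"
    unfolding b_def by (rule point_mass_in_Dist)
  have "Min (range (bellman_rhs \<eta> C \<theta> v b)) \<in> range (bellman_rhs \<eta> C \<theta> v b)"
    by (rule Min_in) auto
  then obtain a where a: "bellman_rhs \<eta> C \<theta> v b a = Min (range (bellman_rhs \<eta> C \<theta> v b))"
    by (metis rangeE)
  show ?thesis
    using acoe_sol_bellman[OF sol b a] acoe_sol_bias_bounds[OF sol b] cbar_bounds[OF cost b, of a]
      sum_Pobs_mult_bias_bounds[OF eta \<theta> sol b, of a] by linarith
qed

text \<open>The bias v' is propagated along the model \<theta>', but the observations are weighted
  according to \<theta>; the mismatch costs at most H times the two distances.\<close>
lemma bellman_drift_le:
  fixes \<eta> :: "'s::finite \<Rightarrow> 'o::finite \<Rightarrow> real"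
  assumes eta: "\<forall>s. \<eta> s \<in> Dist" and \<theta>: "is_kernel \<theta>" and \<theta>': "is_kernel \<theta>'"
    and sol: "acoe_sol \<eta> C H \<theta>' J' v'"
    and b: "b \<in> Dist" and b': "b' \<in> Dist"
    and a: "bellman_rhs \<eta> C \<theta>' v' b' a = Min (range (bellman_rhs \<eta> C \<theta>' v' b'))"
    and W: "\<And>ob. W ob \<le> v' (tau \<eta> \<theta>' b' a ob)"
  shows "cbar C b' a - J' + (\<Sum>ob\<in>UNIV. Pobs \<eta> \<theta> b a ob * W ob)
         \<le> v' b' + H * ((\<Sum>s\<in>UNIV. b s * (\<Sum>s'\<in>UNIV. \<bar>\<theta> s a s' - \<theta>' s a s'\<bar>)) + (\<Sum>s\<in>UNIV. \<bar>b s - b' s\<bar>))"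
proof -
  let ?V = "\<lambda>ob. v' (tau \<eta> \<theta>' b' a ob)"
  have "(\<Sum>ob\<in>UNIV. Pobs \<eta> \<theta> b a ob * W ob) \<le> (\<Sum>ob\<in>UNIV. Pobs \<eta> \<theta> b a ob * ?V ob)"
    by (intro sum_mono mult_left_mono W Pobs_nonneg[OF eta \<theta> b])
  also have "\<dots> = (\<Sum>ob\<in>UNIV. Pobs \<eta> \<theta>' b' a ob * ?V ob)
      + (\<Sum>ob\<in>UNIV. (Pobs \<eta> \<theta> b a ob - Pobs \<eta> \<theta>' b' a ob) * ?V ob)"
    by (simp add: left_diff_distrib sum_subtractf)
  also have "\<dots> \<le> (\<Sum>ob\<in>UNIV. Pobs \<eta> \<theta>' b' a ob * ?V ob)
      + H * ((\<Sum>s\<in>UNIV. b s * (\<Sum>s'\<in>UNIV. \<bar>\<theta> s a s' - \<theta>' s a s'\<bar>)) + (\<Sum>s\<in>UNIV. \<bar>b s - b' s\<bar>))"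
    using acoe_sol_bias_bounds[OF sol tau_in_Dist[OF eta \<theta>' b']]
    by (intro add_left_mono sum_Pobs_diff_mult_le[OF eta \<theta>' b]) auto
  finally show ?thesis
    using acoe_sol_bellman[OF sol b' a] by linarith
qed

section \<open>The PSRL-POMDP process\<close>

lemma finite_measure_posterior:
  assumes "finite_measure F"
  shows "finite_measure (posterior F \<eta> h hs)"
proof (cases "0 < (\<integral>\<theta>. lik \<eta> h \<theta> hs \<partial>F)")
  case True
  define Z where "Z = (\<integral>\<theta>. lik \<eta> h \<theta> hs \<partial>F)"
  have "integrable F (\<lambda>\<theta>. lik \<eta> h \<theta> hs)"
    using True not_integrable_integral_eq by force
  then have int: "integrable F (\<lambda>\<theta>. lik \<eta> h \<theta> hs / Z)"
    by simp
  then have "emeasure (density F (\<lambda>\<theta>. ennreal (lik \<eta> h \<theta> hs / Z))) (space F)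
      = (\<integral>\<^sup>+ \<theta>. ennreal (lik \<eta> h \<theta> hs / Z) \<partial>F)"
    by (auto simp: emeasure_density intro!: nn_integral_cong)
  also have "\<dots> \<noteq> \<infinity>"
    using integrableD(2)[OF int] .
  finally show ?thesis
    using True unfolding posterior_def Z_def[symmetric] Let_def by (intro finite_measureI) simp
next
  case False
  with assms show ?thesis
    by (simp add: posterior_def)
qed

lemma bounded_sum_comp:
  fixes f :: "'i \<Rightarrow> 'b \<Rightarrow> 'c::real_normed_vector"
  assumes "\<And>i. i \<in> I \<Longrightarrow> bounded (f i ` S)"
  shows "bounded ((\<lambda>x. \<Sum>i\<in>I. f i x) ` S)"
  using assms
proof (induction I rule: infinite_finite_induct)
  case (insert i I)
  then show ?case
    by (simp add: bounded_plus_comp)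
qed (auto simp: bounded_iff)

lemma bounded_const_image: "bounded ((\<lambda>x. c) ` S)"
  by (rule bounded_subset[of "{c}"]) auto

abbreviation hist_snoc :: "('a, 'o) hist \<Rightarrow> 'a \<Rightarrow> 'o \<Rightarrow> ('a, 'o) hist" where
  "hist_snoc hs a ob \<equiv> (fst hs, snd hs @ [(a, ob)])"

locale psrl_process =
  fixes \<eta> :: "'s::finite \<Rightarrow> 'o::finite \<Rightarrow> real"
    and h :: "('s, 'a::finite) kern \<Rightarrow> 's \<Rightarrow> real"
    and \<Theta> :: "('s, 'a) kern set"
    and F :: "('s, 'a) kern measure"
    and \<theta>s :: "('s, 'a) kern"
    and pol :: "('s, 'a) kern \<Rightarrow> ('s \<Rightarrow> real) \<Rightarrow> 'a"
    and newep :: "('a, 'o) hist \<Rightarrow> bool"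
  assumes finite_prior: "finite_measure F"
    and space_prior: "space F = \<Theta>"
    and meas_kernel: "\<forall>s a s'. (\<lambda>\<theta>. \<theta> s a s') \<in> borel_measurable F"
    and meas_init: "\<forall>s. (\<lambda>\<theta>. h \<theta> s) \<in> borel_measurable F"
    and meas_pol: "\<forall>hs. (\<lambda>\<theta>. pol \<theta> (belief \<eta> h \<theta> hs)) \<in> measurable F (count_space UNIV)"
begin

abbreviation E where "E \<equiv> ep_expect \<eta> h \<theta>s F newep pol"

abbreviation episode_start :: "('a, 'o) hist \<Rightarrow> bool" where
  "episode_start hs \<equiv> snd hs = [] \<or> newep hs"

definition step_value ::
  "('s \<Rightarrow> 'a \<Rightarrow> ('s, 'a) kern \<Rightarrow> ('a, 'o) hist \<Rightarrow> bool \<Rightarrow> real) \<Rightarrow> nat \<Rightarrow> 's \<Rightarrow> ('a, 'o) hist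
   \<Rightarrow> ('s, 'a) kern \<Rightarrow> bool \<Rightarrow> real" where
  "step_value g n s hs \<theta> fl = (let a = pol \<theta> (belief \<eta> h \<theta> hs) in
     g s a \<theta> hs fl + (\<Sum>s'\<in>UNIV. \<theta>s s a s' * (\<Sum>ob\<in>UNIV. \<eta> s' ob * E g n s' (hist_snoc hs a ob) \<theta>)))"

lemma ep_expect_Suc:
  "E g (Suc n) s hs th = (if episode_start hs
     then \<integral>\<theta>. step_value g n s hs \<theta> True \<partial>posterior F \<eta> h hs
     else step_value g n s hs th False)"
  by (simp add: step_value_def Let_def)

lemma measurable_kernel [measurable]: "(\<lambda>\<theta>. \<theta> s a s') \<in> borel_measurable F"
  using meas_kernel by blast

lemma measurable_init [measurable]: "(\<lambda>\<theta>. h \<theta> s) \<in> borel_measurable F"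
  using meas_init by blast

lemma measurable_init_belief: "(\<lambda>\<theta>. init_belief \<eta> h \<theta> o1 s) \<in> borel_measurable F"
proof -
  have "(\<lambda>\<theta>. init_belief \<eta> h \<theta> o1 s) = (\<lambda>\<theta>. if (\<Sum>s\<in>UNIV. \<eta> s o1 * h \<theta> s) = 0 then h \<theta> s
          else \<eta> s o1 * h \<theta> s / (\<Sum>s\<in>UNIV. \<eta> s o1 * h \<theta> s))"
    by (auto simp: init_belief_def Let_def fun_eq_iff)
  also have "\<dots> \<in> borel_measurable F"
    by measurable
  finally show ?thesis .
qed

lemma measurable_tau:
  assumes [measurable]: "\<And>s. (\<lambda>\<theta>. b \<theta> s) \<in> borel_measurable F"
  shows "(\<lambda>\<theta>. tau \<eta> \<theta> (b \<theta>) a ob s') \<in> borel_measurable F"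
proof -
  have "(\<lambda>\<theta>. tau \<eta> \<theta> (b \<theta>) a ob s') = (\<lambda>\<theta>.
      if (\<Sum>s'\<in>UNIV. \<Sum>s\<in>UNIV. \<eta> s' ob * \<theta> s a s' * b \<theta> s) = 0 then b \<theta> s'
      else (\<Sum>s\<in>UNIV. \<eta> s' ob * \<theta> s a s' * b \<theta> s) / (\<Sum>s'\<in>UNIV. \<Sum>s\<in>UNIV. \<eta> s' ob * \<theta> s a s' * b \<theta> s))"
    by (auto simp: tau_def Pobs_def fun_eq_iff)
  also have "\<dots> \<in> borel_measurable F"
    by measurable
  finally show ?thesis .
qed

lemma measurable_belief [measurable]: "(\<lambda>\<theta>. belief \<eta> h \<theta> hs s) \<in> borel_measurable F"
proof (cases hs)
  case (Pair o1 xs)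
  have "(\<lambda>\<theta>. belief \<eta> h \<theta> (o1, xs) s) \<in> borel_measurable F" for s
  proof (induction xs arbitrary: s rule: rev_induct)
    case Nil
    show ?case
      using measurable_init_belief by (simp add: belief_Nil)
  next
    case (snoc x xs)
    then show ?case
      using measurable_tau by (cases x) (simp add: belief_snoc)
  qed
  with Pair show ?thesis
    by simp
qed

lemma sets_posterior: "sets (posterior F \<eta> h hs) = sets F"
  by (simp add: posterior_def Let_def)

lemma space_posterior: "space (posterior F \<eta> h hs) = \<Theta>"
  using space_prior by (simp add: posterior_def Let_def)

lemma integrable_posterior:
  fixes f :: "('s, 'a) kern \<Rightarrow> real"
  assumes "f \<in> borel_measurable F" and "bounded (f ` \<Theta>)"
  shows "integrable (posterior F \<eta> h hs) f"
proof -
  interpret finite_measure "posterior F \<eta> h hs"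
    using finite_prior by (rule finite_measure_posterior)
  obtain B where "\<forall>\<theta>\<in>\<Theta>. \<bar>f \<theta>\<bar> \<le> B"
    using assms(2) by (auto simp: bounded_iff)
  then have "AE \<theta> in posterior F \<eta> h hs. norm (f \<theta>) \<le> B"
    by (intro AE_I2) (simp add: space_posterior)
  moreover have "f \<in> borel_measurable (posterior F \<eta> h hs)"
    using assms(1) by (simp add: measurable_cong_sets[OF sets_posterior refl])
  ultimately show ?thesis
    by (rule integrable_const_bound)
qed

text \<open>Makes the posterior integrals in ep_expect exist, so that ep_expect is linear in the
  reward.\<close>
definition regular_reward ::
  "('s \<Rightarrow> 'a \<Rightarrow> ('s, 'a) kern \<Rightarrow> ('a, 'o) hist \<Rightarrow> bool \<Rightarrow> real) \<Rightarrow> bool" where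
  "regular_reward g \<longleftrightarrow> (\<forall>s a hs fl.
     (\<lambda>\<theta>. g s a \<theta> hs fl) \<in> borel_measurable F \<and> bounded ((\<lambda>\<theta>. g s a \<theta> hs fl) ` \<Theta>))"

lemma regular_rewardI:
  assumes "\<And>s a hs fl. (\<lambda>\<theta>. g s a \<theta> hs fl) \<in> borel_measurable F"
    and "\<And>s a hs fl \<theta>. \<theta> \<in> \<Theta> \<Longrightarrow> \<bar>g s a \<theta> hs fl\<bar> \<le> B"
  shows "regular_reward g"
  using assms unfolding regular_reward_def bounded_iff by fastforce

lemma regular_reward_const: "regular_reward (\<lambda>s a \<theta> hs fl. c s a hs fl)"
  by (simp add: regular_reward_def bounded_const_image)

lemma regular_reward_diff:
  assumes "regular_reward g1" and "regular_reward g2"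
  shows "regular_reward (\<lambda>s a \<theta> hs fl. g1 s a \<theta> hs fl - g2 s a \<theta> hs fl)"
  using assms unfolding regular_reward_def by (auto intro!: bounded_minus_comp borel_measurable_diff)

lemma regular_reward_scale:
  assumes "regular_reward g"
  shows "regular_reward (\<lambda>s a \<theta> hs fl. c * g s a \<theta> hs fl)"
  using assms unfolding regular_reward_def
  by (auto intro!: borel_measurable_times bounded_scaleR_comp[where 'b=real, simplified])

lemma step_value_regular:
  assumes g: "regular_reward g"
    and E: "\<And>s hs. (\<lambda>\<theta>. E g n s hs \<theta>) \<in> borel_measurable F \<and> bounded ((\<lambda>\<theta>. E g n s hs \<theta>) ` \<Theta>)"
  shows "(\<lambda>\<theta>. step_value g n s hs \<theta> fl) \<in> borel_measurable F
    \<and> bounded ((\<lambda>\<theta>. step_value g n s hs \<theta> fl) ` \<Theta>)"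
proof
  define G where "G a \<theta> = g s a \<theta> hs fl
    + (\<Sum>s'\<in>UNIV. \<theta>s s a s' * (\<Sum>ob\<in>UNIV. \<eta> s' ob * E g n s' (hist_snoc hs a ob) \<theta>))" for a \<theta>
  have step: "step_value g n s hs \<theta> fl = G (pol \<theta> (belief \<eta> h \<theta> hs)) \<theta>" for \<theta>
    by (simp add: step_value_def G_def Let_def)
  have g_meas: "(\<lambda>\<theta>. g s a \<theta> hs fl) \<in> borel_measurable F"
    and g_bdd: "bounded ((\<lambda>\<theta>. g s a \<theta> hs fl) ` \<Theta>)" for a
    using g unfolding regular_reward_def by blast+
  have E_meas: "(\<lambda>\<theta>. E g n s' hs' \<theta>) \<in> borel_measurable F"
    and E_bdd: "bounded ((\<lambda>\<theta>. E g n s' hs' \<theta>) ` \<Theta>)" for s' hs'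
    using E by blast+
  have "(\<lambda>\<theta>. G a \<theta>) \<in> borel_measurable F" for a
    unfolding G_def
    by (intro borel_measurable_add borel_measurable_sum borel_measurable_times borel_measurable_const
        g_meas E_meas)
  then have "(\<lambda>\<theta>. G (pol \<theta> (belief \<eta> h \<theta> hs)) \<theta>) \<in> borel_measurable F"
    by (rule measurable_compose_countable'[OF _ meas_pol[rule_format]]) (simp add: countable_finite)
  then show "(\<lambda>\<theta>. step_value g n s hs \<theta> fl) \<in> borel_measurable F"
    by (simp add: step)
  have "bounded (G a ` \<Theta>)" for a
    unfolding G_def
    by (intro bounded_plus_comp bounded_sum_comp bounded_scaleR_comp[where 'b=real, simplified]
        g_bdd E_bdd)
  then have "bounded (\<Union>a. G a ` \<Theta>)"
    by (intro bounded_UN) auto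
  then show "bounded ((\<lambda>\<theta>. step_value g n s hs \<theta> fl) ` \<Theta>)"
    by (rule bounded_subset) (auto simp: step)
qed

lemma ep_expect_regular:
  assumes "regular_reward g"
  shows "(\<lambda>\<theta>. E g n s hs \<theta>) \<in> borel_measurable F \<and> bounded ((\<lambda>\<theta>. E g n s hs \<theta>) ` \<Theta>)"
proof (induction n arbitrary: s hs)
  case 0
  then show ?case
    by (simp add: bounded_const_image)
next
  case (Suc n)
  show ?case
    unfolding ep_expect_Suc using step_value_regular[OF assms Suc.IH, of s hs False]
    by (cases "episode_start hs") (simp_all add: bounded_const_image)
qed

lemma integrable_step_value:
  assumes "regular_reward g"
  shows "integrable (posterior F \<eta> h hs) (\<lambda>\<theta>. step_value g n s hs \<theta> fl)"
  using step_value_regular[OF assms ep_expect_regular[OF assms]] by (intro integrable_posterior) auto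

lemma ep_expect_diff:
  assumes g1: "regular_reward g1" and g2: "regular_reward g2"
  shows "E (\<lambda>s a \<theta> hs fl. g1 s a \<theta> hs fl - g2 s a \<theta> hs fl) n s hs th = E g1 n s hs th - E g2 n s hs th"
proof (induction n arbitrary: s hs th)
  case 0
  show ?case
    by simp
next
  case (Suc n)
  have step: "step_value (\<lambda>s a \<theta> hs fl. g1 s a \<theta> hs fl - g2 s a \<theta> hs fl) n s hs \<theta> fl
      = step_value g1 n s hs \<theta> fl - step_value g2 n s hs \<theta> fl" for \<theta> fl
    by (simp add: step_value_def Let_def Suc.IH sum_subtractf right_diff_distrib)
  show ?case
    unfolding ep_expect_Suc step
    using integrable_step_value[OF g1] integrable_step_value[OF g2] by simp
qed

lemma ep_expect_scale: "E (\<lambda>s a \<theta> hs fl. c * g s a \<theta> hs fl) n s hs th = c * E g n s hs th"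
proof (induction n arbitrary: s hs th)
  case 0
  show ?case
    by simp
next
  case (Suc n)
  have step: "step_value (\<lambda>s a \<theta> hs fl. c * g s a \<theta> hs fl) n s hs \<theta> fl = c * step_value g n s hs \<theta> fl"
    for \<theta> fl
    by (simp add: step_value_def Let_def Suc.IH sum_distrib_left distrib_left mult.left_commute)
  show ?case
    unfolding ep_expect_Suc step by simp
qed

lemma expect_sum_diff:
  assumes "regular_reward g1" and "regular_reward g2"
  shows "expect_sum \<eta> h \<theta>s F newep pol (\<lambda>s a \<theta> hs fl. g1 s a \<theta> hs fl - g2 s a \<theta> hs fl) T
       = expect_sum \<eta> h \<theta>s F newep pol g1 T - expect_sum \<eta> h \<theta>s F newep pol g2 T"
  unfolding expect_sum_def ep_expect_diff[OF assms] by (simp add: right_diff_distrib sum_subtractf)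

lemma expect_sum_scale:
  "expect_sum \<eta> h \<theta>s F newep pol (\<lambda>s a \<theta> hs fl. c * g s a \<theta> hs fl) T
   = c * expect_sum \<eta> h \<theta>s F newep pol g T"
  unfolding expect_sum_def ep_expect_scale by (simp add: sum_distrib_left mult.left_commute)

end

section \<open>The regret decomposition\<close>

locale psrl_regret = psrl_process \<eta> h \<Theta> F \<theta>s pol newep
  for \<eta> :: "'s::finite \<Rightarrow> 'o::finite \<Rightarrow> real" and h :: "('s, 'a::finite) kern \<Rightarrow> 's \<Rightarrow> real"
    and \<Theta> F \<theta>s pol newep +
  fixes C :: "'s \<Rightarrow> 'a \<Rightarrow> real"
    and H :: real
    and J :: "('s, 'a) kern \<Rightarrow> real"
    and v :: "('s, 'a) kern \<Rightarrow> ('s \<Rightarrow> real) \<Rightarrow> real"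
  assumes eta: "\<forall>s. \<eta> s \<in> Dist"
    and cost: "\<forall>s a. 0 \<le> C s a \<and> C s a \<le> 1"
    and init: "\<forall>\<theta>\<in>\<Theta>. h \<theta> \<in> Dist"
    and kernels: "\<forall>\<theta>\<in>\<Theta>. is_kernel \<theta>"
    and sol: "\<forall>\<theta>\<in>\<Theta>. acoe_sol \<eta> C H \<theta> (J \<theta>) (v \<theta>)"
    and pol_min: "\<forall>\<theta>\<in>\<Theta>. \<forall>b\<in>Dist.
      bellman_rhs \<eta> C \<theta> (v \<theta>) b (pol \<theta> b) = Min (range (bellman_rhs \<eta> C \<theta> (v \<theta>) b))"
    and meas_J: "J \<in> borel_measurable F"
    and true_param: "\<theta>s \<in> \<Theta>"
begin

lemma belief_in_Dist_param: "\<theta> \<in> \<Theta> \<Longrightarrow> belief \<eta> h \<theta> hs \<in> Dist"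
  using belief_in_Dist[OF eta] kernels init by blast

definition charge :: "'s \<Rightarrow> 'a \<Rightarrow> ('s, 'a) kern \<Rightarrow> ('a, 'o) hist \<Rightarrow> bool \<Rightarrow> real" where
  "charge = (\<lambda>s a \<theta> hs fl.
     C s a - J \<theta>s - H * (if fl then 1 else 0) - (J \<theta> - J \<theta>s)
     - H * ((\<Sum>s'\<in>UNIV. \<bar>\<theta>s s a s' - \<theta> s a s'\<bar>)
            + (\<Sum>s''\<in>UNIV. \<bar>belief \<eta> h \<theta>s hs s'' - belief \<eta> h \<theta> hs s''\<bar>))
     - (cbar C (belief \<eta> h \<theta>s hs) a - cbar C (belief \<eta> h \<theta> hs) a))"

lemma regular_reward_gain_diff: "regular_reward (\<lambda>s a \<theta> hs fl. J \<theta> - J \<theta>s)"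
proof (rule regular_rewardI[where B = "1 + H + \<bar>J \<theta>s\<bar>"])
  fix \<theta> assume "\<theta> \<in> \<Theta>"
  then show "\<bar>J \<theta> - J \<theta>s\<bar> \<le> 1 + H + \<bar>J \<theta>s\<bar>"
    using acoe_sol_gain_bound[OF eta cost] kernels sol by fastforce
qed (use meas_J in measurable)

lemma regular_reward_distances:
  "regular_reward (\<lambda>s a \<theta> hs fl. (\<Sum>s'\<in>UNIV. \<bar>\<theta>s s a s' - \<theta> s a s'\<bar>)
     + (\<Sum>s''\<in>UNIV. \<bar>belief \<eta> h \<theta>s hs s'' - belief \<eta> h \<theta> hs s''\<bar>))"
proof (rule regular_rewardI[where B = 4])
  fix s a hs and \<theta> assume \<theta>: "\<theta> \<in> \<Theta>"
  have "(\<Sum>s'\<in>UNIV. \<bar>\<theta>s s a s' - \<theta> s a s'\<bar>) \<le> 2"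
    using kernels \<theta> true_param by (intro sum_abs_diff_Dist_le) (auto simp: is_kernel_def)
  moreover have "(\<Sum>s''\<in>UNIV. \<bar>belief \<eta> h \<theta>s hs s'' - belief \<eta> h \<theta> hs s''\<bar>) \<le> 2"
    using \<theta> true_param by (intro sum_abs_diff_Dist_le belief_in_Dist_param)
  ultimately show "\<bar>(\<Sum>s'\<in>UNIV. \<bar>\<theta>s s a s' - \<theta> s a s'\<bar>)
      + (\<Sum>s''\<in>UNIV. \<bar>belief \<eta> h \<theta>s hs s'' - belief \<eta> h \<theta> hs s''\<bar>)\<bar> \<le> 4"
    by (simp add: sum_nonneg)
qed measurable

lemma regular_reward_cbar_diff:
  "regular_reward (\<lambda>s a \<theta> hs fl. cbar C (belief \<eta> h \<theta>s hs) a - cbar C (belief \<eta> h \<theta> hs) a)"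
proof (rule regular_rewardI[where B = 1])
  fix s a hs and \<theta> assume \<theta>: "\<theta> \<in> \<Theta>"
  show "\<bar>cbar C (belief \<eta> h \<theta>s hs) a - cbar C (belief \<eta> h \<theta> hs) a\<bar> \<le> 1"
    using cbar_bounds[OF cost belief_in_Dist_param[OF true_param], of hs a]
      cbar_bounds[OF cost belief_in_Dist_param[OF \<theta>], of hs a] by linarith
qed (unfold cbar_def, measurable)

lemma expect_sum_charge:
  "expect_sum \<eta> h \<theta>s F newep pol charge T =
     expect_sum \<eta> h \<theta>s F newep pol (\<lambda>s a \<theta>k hs fl. C s a - J \<theta>s) T
     - H * expect_sum \<eta> h \<theta>s F newep pol (\<lambda>s a \<theta>k hs fl. if fl then 1 else 0) T
     - expect_sum \<eta> h \<theta>s F newep pol (\<lambda>s a \<theta>k hs fl. J \<theta>k - J \<theta>s) T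
     - H * expect_sum \<eta> h \<theta>s F newep pol
         (\<lambda>s a \<theta>k hs fl. (\<Sum>s'\<in>UNIV. \<bar>\<theta>s s a s' - \<theta>k s a s'\<bar>)
            + (\<Sum>s''\<in>UNIV. \<bar>belief \<eta> h \<theta>s hs s'' - belief \<eta> h \<theta>k hs s''\<bar>)) T
     - expect_sum \<eta> h \<theta>s F newep pol
         (\<lambda>s a \<theta>k hs fl. cbar C (belief \<eta> h \<theta>s hs) a - cbar C (belief \<eta> h \<theta>k hs) a) T"
  unfolding charge_def
  by (simp only: expect_sum_diff expect_sum_scale regular_reward_diff regular_reward_scale
      regular_reward_const regular_reward_gain_diff regular_reward_distances regular_reward_cbar_diff)

lemma sum_belief_charge:
  "(\<Sum>s\<in>UNIV. belief \<eta> h \<theta>s hs s * charge s a \<theta> hs fl) =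
     cbar C (belief \<eta> h \<theta> hs) a - J \<theta> - H * (if fl then 1 else 0)
     - H * ((\<Sum>s\<in>UNIV. belief \<eta> h \<theta>s hs s * (\<Sum>s'\<in>UNIV. \<bar>\<theta>s s a s' - \<theta> s a s'\<bar>))
            + (\<Sum>s\<in>UNIV. \<bar>belief \<eta> h \<theta>s hs s - belief \<eta> h \<theta> hs s\<bar>))"
proof -
  define b where "b = belief \<eta> h \<theta>s hs"
  define X where "X s = (\<Sum>s'\<in>UNIV. \<bar>\<theta>s s a s' - \<theta> s a s'\<bar>)" for s
  define K where "K = - H * (if fl then 1 else 0) - J \<theta> - H * (\<Sum>s\<in>UNIV. \<bar>b s - belief \<eta> h \<theta> hs s\<bar>)
     - (cbar C b a - cbar C (belief \<eta> h \<theta> hs) a)"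
  have charge_eq: "charge s a \<theta> hs fl = C s a - H * X s + K" for s
    by (simp add: charge_def X_def K_def b_def algebra_simps)
  have "(\<Sum>s\<in>UNIV. b s * charge s a \<theta> hs fl)
      = (\<Sum>s\<in>UNIV. C s a * b s) - H * (\<Sum>s\<in>UNIV. b s * X s) + K * (\<Sum>s\<in>UNIV. b s)"
    unfolding charge_eq by (simp add: algebra_simps sum.distrib sum_subtractf sum_distrib_left)
  also have "\<dots> = cbar C b a - H * (\<Sum>s\<in>UNIV. b s * X s) + K"
    using belief_in_Dist_param[OF true_param] by (simp add: cbar_def sum_Dist b_def)
  finally show ?thesis
    by (simp add: K_def X_def b_def algebra_simps)
qed

lemma regular_reward_charge: "regular_reward charge"
  unfolding charge_def
  by (intro regular_reward_diff regular_reward_scale regular_reward_const regular_reward_gain_diff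
      regular_reward_distances regular_reward_cbar_diff)

lemma bias_bounds_param:
  assumes "\<theta> \<in> \<Theta>"
  shows "0 \<le> v \<theta> (belief \<eta> h \<theta> hs)" "v \<theta> (belief \<eta> h \<theta> hs) \<le> H"
  using acoe_sol_bias_bounds[OF sol[rule_format, OF assms] belief_in_Dist_param[OF assms]] by auto

lemma sum_belief_step_value_charge_le:
  assumes \<theta>: "\<theta> \<in> \<Theta>"
    and children: "\<And>ob. let hs' = hist_snoc hs (pol \<theta> (belief \<eta> h \<theta> hs)) ob in
      (\<Sum>s\<in>UNIV. belief \<eta> h \<theta>s hs' s * E charge n s hs' \<theta>) \<le> v \<theta> (belief \<eta> h \<theta> hs')"
  shows "(\<Sum>s\<in>UNIV. belief \<eta> h \<theta>s hs s * step_value charge n s hs \<theta> fl)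
         \<le> v \<theta> (belief \<eta> h \<theta> hs) - H * (if fl then 1 else 0)"
proof -
  define b where "b = belief \<eta> h \<theta>s hs"
  define b' where "b' = belief \<eta> h \<theta> hs"
  define a where "a = pol \<theta> b'"
  define W where "W ob = (\<Sum>s'\<in>UNIV. tau \<eta> \<theta>s b a ob s' * E charge n s' (hist_snoc hs a ob) \<theta>)" for ob
  have b: "b \<in> Dist" and b': "b' \<in> Dist"
    unfolding b_def b'_def using \<theta> true_param by (simp_all add: belief_in_Dist_param)
  have \<theta>s_kernel: "is_kernel \<theta>s" and \<theta>_kernel: "is_kernel \<theta>"
    using kernels true_param \<theta> by blast+
  have a: "bellman_rhs \<eta> C \<theta> (v \<theta>) b' a = Min (range (bellman_rhs \<eta> C \<theta> (v \<theta>) b'))"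
    using pol_min \<theta> b' unfolding a_def by blast
  have "belief \<eta> h \<theta>' (hist_snoc hs a ob) = tau \<eta> \<theta>' (belief \<eta> h \<theta>' hs) a ob" for \<theta>' ob
    using belief_snoc[of \<eta> h \<theta>' "fst hs" "snd hs" a ob] by simp
  then have W: "W ob \<le> v \<theta> (tau \<eta> \<theta> b' a ob)" for ob
    using children[of ob] unfolding W_def a_def b_def b'_def by (simp add: Let_def)
  have "(\<Sum>s\<in>UNIV. b s * step_value charge n s hs \<theta> fl)
      = (\<Sum>s\<in>UNIV. b s * charge s a \<theta> hs fl)
        + (\<Sum>s\<in>UNIV. b s * (\<Sum>s'\<in>UNIV. \<theta>s s a s' * (\<Sum>ob\<in>UNIV. \<eta> s' ob * E charge n s' (hist_snoc hs a ob) \<theta>)))"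
    by (simp add: step_value_def Let_def a_def b'_def distrib_left sum.distrib)
  also have "\<dots> = (\<Sum>s\<in>UNIV. b s * charge s a \<theta> hs fl) + (\<Sum>ob\<in>UNIV. Pobs \<eta> \<theta>s b a ob * W ob)"
    unfolding W_def by (simp only: sum_one_step_eq_sum_Pobs_tau[OF eta \<theta>s_kernel b])
  also have "\<dots> \<le> v \<theta> b' - H * (if fl then 1 else 0)"
    using bellman_drift_le[OF eta \<theta>s_kernel \<theta>_kernel sol[rule_format, OF \<theta>] b b' a W]
      sum_belief_charge[of hs a \<theta> fl]
    unfolding b_def b'_def by linarith
  finally show ?thesis
    unfolding b_def b'_def .
qed

lemma sum_belief_posterior_step_value_charge_nonpos:
  assumes step: "\<And>\<theta>. \<theta> \<in> \<Theta> \<Longrightarrow>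
    (\<Sum>s\<in>UNIV. belief \<eta> h \<theta>s hs s * step_value charge n s hs \<theta> True) \<le> v \<theta> (belief \<eta> h \<theta> hs) - H"
  shows "(\<Sum>s\<in>UNIV. belief \<eta> h \<theta>s hs s
    * (\<integral>\<theta>. step_value charge n s hs \<theta> True \<partial>posterior F \<eta> h hs)) \<le> 0"
proof -
  let ?M = "posterior F \<eta> h hs"
  let ?f = "\<lambda>\<theta>. \<Sum>s\<in>UNIV. belief \<eta> h \<theta>s hs s * step_value charge n s hs \<theta> True"
  have "AE \<theta> in ?M. 0 \<le> - ?f \<theta>"
  proof (rule AE_I2)
    fix \<theta> assume "\<theta> \<in> space ?M"
    then have "\<theta> \<in> \<Theta>"
      by (simp add: space_posterior)
    then show "0 \<le> - ?f \<theta>"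
      using step bias_bounds_param(2)[of \<theta> hs] by fastforce
  qed
  then have "0 \<le> (\<integral>\<theta>. - ?f \<theta> \<partial>?M)"
    by (rule integral_nonneg_AE)
  then show ?thesis
    by (simp add: integrable_step_value[OF regular_reward_charge])
qed

lemma sum_belief_ep_expect_charge_le:
  "(episode_start hs \<longrightarrow> (\<Sum>s\<in>UNIV. belief \<eta> h \<theta>s hs s * E charge n s hs th) \<le> 0)
   \<and> (th \<in> \<Theta> \<longrightarrow> (\<Sum>s\<in>UNIV. belief \<eta> h \<theta>s hs s * E charge n s hs th) \<le> v th (belief \<eta> h th hs))"
proof (induction n arbitrary: hs th)
  case 0
  show ?case
    using bias_bounds_param(1) by simp
next
  case (Suc n)
  have step: "(\<Sum>s\<in>UNIV. belief \<eta> h \<theta>s hs s * step_value charge n s hs \<theta> fl)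
      \<le> v \<theta> (belief \<eta> h \<theta> hs) - H * (if fl then 1 else 0)" if "\<theta> \<in> \<Theta>" for \<theta> fl
    using Suc.IH that by (intro sum_belief_step_value_charge_le) (auto simp: Let_def)
  show ?case
  proof (cases "episode_start hs")
    case True
    have "(\<Sum>s\<in>UNIV. belief \<eta> h \<theta>s hs s
        * (\<integral>\<theta>. step_value charge n s hs \<theta> True \<partial>posterior F \<eta> h hs)) \<le> 0"
      by (rule sum_belief_posterior_step_value_charge_nonpos) (use step[of _ True] in simp)
    with True have "(\<Sum>s\<in>UNIV. belief \<eta> h \<theta>s hs s * E charge (Suc n) s hs th) \<le> 0"
      unfolding ep_expect_Suc by simp
    then show ?thesis
      using bias_bounds_param(1)[of th hs] by auto
  next
    case False
    then show ?thesis
      using step[of th False] unfolding ep_expect_Suc by simp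
  qed
qed

lemma expect_sum_charge_nonpos: "expect_sum \<eta> h \<theta>s F newep pol charge T \<le> 0"
proof -
  have "0 \<le> \<eta> s ob * h \<theta>s s" for s ob
    using eta init true_param by (simp add: Dist_nonneg)
  then have "expect_sum \<eta> h \<theta>s F newep pol charge T
      = (\<Sum>ob\<in>UNIV. (\<Sum>s\<in>UNIV. \<eta> s ob * h \<theta>s s) *
            (\<Sum>s\<in>UNIV. belief \<eta> h \<theta>s (ob, []) s * E charge T s (ob, []) undefined))"
    by (intro expect_sum_eq_sum_init_belief) blast
  also have "\<dots> \<le> 0"
  proof (rule sum_nonpos)
    fix ob
    have "(\<Sum>s\<in>UNIV. belief \<eta> h \<theta>s (ob, []) s * E charge T s (ob, []) undefined) \<le> 0"
      using sum_belief_ep_expect_charge_le[of "(ob, [])"] by simp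
    with \<open>\<And>s ob. 0 \<le> \<eta> s ob * h \<theta>s s\<close>
    show "(\<Sum>s\<in>UNIV. \<eta> s ob * h \<theta>s s) *
        (\<Sum>s\<in>UNIV. belief \<eta> h \<theta>s (ob, []) s * E charge T s (ob, []) undefined) \<le> 0"
      by (intro mult_nonneg_nonpos sum_nonneg)
  qed
  finally show ?thesis .
qed

end

theorem lemma2:
  fixes \<eta> :: "'s::finite \<Rightarrow> 'o::finite \<Rightarrow> real"
    and C :: "'s \<Rightarrow> 'a::finite \<Rightarrow> real"
    and h :: "('s, 'a) kern \<Rightarrow> 's \<Rightarrow> real"
    and H :: real
    and \<Theta> :: "('s, 'a) kern set"
    and F :: "('s, 'a) kern measure"
    and \<theta>s :: "('s, 'a) kern"
    and J :: "('s, 'a) kern \<Rightarrow> real"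
    and v :: "('s, 'a) kern \<Rightarrow> ('s \<Rightarrow> real) \<Rightarrow> real"
    and pol :: "('s, 'a) kern \<Rightarrow> ('s \<Rightarrow> real) \<Rightarrow> 'a"
    and newep :: "('a, 'o) hist \<Rightarrow> bool"
    and T :: nat
  assumes eta: "\<forall>s. \<eta> s \<in> Dist"
    and cost: "\<forall>s a. 0 \<le> C s a \<and> C s a \<le> 1"
    and init: "\<forall>\<theta>\<in>\<Theta>. h \<theta> \<in> Dist"
    and Theta: "\<Theta> \<subseteq> Theta_H \<eta> C H"
    and sol: "\<forall>\<theta>\<in>\<Theta>. acoe_sol \<eta> C H \<theta> (J \<theta>) (v \<theta>)"
    and pol_min: "\<forall>\<theta>\<in>\<Theta>. \<forall>b\<in>Dist.
                    bellman_rhs \<eta> C \<theta> (v \<theta>) b (pol \<theta> b) = Min (range (bellman_rhs \<eta> C \<theta> (v \<theta>) b))"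
    and prior: "prob_space F" "space F = \<Theta>"
    and meas_kernel: "\<forall>s a s'. (\<lambda>\<theta>. \<theta> s a s') \<in> borel_measurable F"
    and meas_init: "\<forall>s. (\<lambda>\<theta>. h \<theta> s) \<in> borel_measurable F"
    and meas_J: "J \<in> borel_measurable F"
    and meas_pol: "\<forall>hs. (\<lambda>\<theta>. pol \<theta> (belief \<eta> h \<theta> hs)) \<in> measurable F (count_space UNIV)"
    and true_param: "\<theta>s \<in> \<Theta>"
  shows
   "expect_sum \<eta> h \<theta>s F newep pol (\<lambda>s a \<theta>k hs fl. C s a - J \<theta>s) T
    \<le> H * expect_sum \<eta> h \<theta>s F newep pol (\<lambda>s a \<theta>k hs fl. if fl then 1 else 0) T
      + expect_sum \<eta> h \<theta>s F newep pol (\<lambda>s a \<theta>k hs fl. J \<theta>k - J \<theta>s) T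
      + H * expect_sum \<eta> h \<theta>s F newep pol
              (\<lambda>s a \<theta>k hs fl. (\<Sum>s'\<in>UNIV. \<bar>\<theta>s s a s' - \<theta>k s a s'\<bar>)
                 + (\<Sum>s''\<in>UNIV. \<bar>belief \<eta> h \<theta>s hs s'' - belief \<eta> h \<theta>k hs s''\<bar>)) T
      + expect_sum \<eta> h \<theta>s F newep pol
              (\<lambda>s a \<theta>k hs fl. cbar C (belief \<eta> h \<theta>s hs) a - cbar C (belief \<eta> h \<theta>k hs) a) T"
proof -
  have kernels: "\<forall>\<theta>\<in>\<Theta>. is_kernel \<theta>"
    using Theta by (auto simp: Theta_H_def)
  interpret psrl_regret \<eta> h \<Theta> F \<theta>s pol newep C H J v
    by (intro psrl_regret.intro psrl_process.intro psrl_regret_axioms.intro) (fact prob_space.axioms(1)[OF prior(1)] prior(2) meas_kernel meas_init meas_pol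
      eta cost init kernels sol pol_min meas_J true_param)+
  show ?thesis
    using expect_sum_charge[of T] expect_sum_charge_nonpos[of T] by linarith
qed

end
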